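(* Given a homogeneous basis $\{x^p\}$ of $H^\ast$ with respect to $H^\ast=H_i^\ast\oplus H_v^\ast\oplus H_g^\ast$, there is an isomorphism of vector spaces \[ \mathrm{Br}\llbracket H^\ast\rrbracket\cong k\llbracket x^p\rrbracket/\mathcal I, \] where $\mathcal I$ is the ideal generated by $\{x_v^px_g^q\}$ (products of a basis element of $H_v^\ast$ with a basis element of $H_g^\ast$).
   Context: $G=\mathbb{Z}/2\mathbb{Z}=\{e,g\}$, $k$ a field of characteristic zero. $(H,\rho)$ is a finite dimensional self-invariant $\mathbb{Z}/2\mathbb{Z}$-graded $\mathbb{Z}/2\mathbb{Z}$-module ($g$ acts trivially on $H_g$), so $H=H_i\oplus H_v\oplus H_g$ where $H_e=H_i\oplus H_v$, $g$ acts trivially on $H_i$ and by $-1$ on $H_v$; $H^G=H_i\oplus H_g$. $B_n$ acts on $H^{\otimes n}$ through the braiding $v\otimes w\mapsto(h\cdot w)\otimes v$ for $v\in H_h$, and $\mathrm{Br}\llbracket H^\ast\rrbracket=\prod_n\mathrm{Br}^nH^\ast$ with $\mathrm{Br}^nH^\ast$ the $B_n$-invariant $n$-linear forms. The isomorphism uses the identification of symmetric $n$-linear forms with homogeneous polynomials of degree $n$ (subscripts on $x^p$ indicate the summand $i,v,g$). *)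

theory Defs
  imports Complex_Main
begin

text \<open>Hi, Hv, Hg are the three summands; H_e = H_i + H_v is the degree-e part,
  Hg the degree-g part.  The generator g of G acts by rho.\<close>

definition sum_sp :: "'h::ab_group_add set \<Rightarrow> 'h set \<Rightarrow> 'h set" where
  "sum_sp A B = {a + b | a b. a \<in> A \<and> b \<in> B}"

definition direct_sum3 :: "'h::ab_group_add set \<Rightarrow> 'h set \<Rightarrow> 'h set \<Rightarrow> bool" where
  "direct_sum3 A B C \<longleftrightarrow>
     (\<forall>h. \<exists>!(a, b, c). a \<in> A \<and> b \<in> B \<and> c \<in> C \<and> h = a + b + c)"

text \<open>Linear functionals on H lying in the summand S^* of H^* = H_i^* + H_v^* + H_g^*
  (functionals vanishing on the two complementary summands).\<close>
definition dual_part :: "('k::field \<Rightarrow> 'h::ab_group_add \<Rightarrow> 'h) \<Rightarrow> 'h set \<Rightarrow> 'h set \<Rightarrow> ('h \<Rightarrow> 'k) set"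
  where "dual_part scale A B =
     {f. Vector_Spaces.linear scale (*) f \<and> (\<forall>h \<in> A \<union> B. f h = 0)}"

definition dual_basis :: "('k::field \<Rightarrow> 'h::ab_group_add \<Rightarrow> 'h) \<Rightarrow> ('p::finite \<Rightarrow> 'h \<Rightarrow> 'k) \<Rightarrow> bool"
  where "dual_basis scale x \<longleftrightarrow>
     (\<forall>p. Vector_Spaces.linear scale (*) (x p)) \<and>
     (\<forall>f. Vector_Spaces.linear scale (*) f \<longrightarrow>
          (\<exists>!c :: 'p \<Rightarrow> 'k. f = (\<lambda>h. \<Sum>p\<in>UNIV. c p * x p h)))"

definition multilinear_form ::
  "('k::field \<Rightarrow> 'h::ab_group_add \<Rightarrow> 'h) \<Rightarrow> nat \<Rightarrow> ('h list \<Rightarrow> 'k) \<Rightarrow> bool" where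
  "multilinear_form scale n f \<longleftrightarrow>
     (\<forall>vs. length vs \<noteq> n \<longrightarrow> f vs = 0) \<and>
     (\<forall>vs j. length vs = n \<longrightarrow> j < n \<longrightarrow>
        Vector_Spaces.linear scale (*) (\<lambda>v. f (vs[j := v])))"

text \<open>Invariance under the standard generator sigma_j (j+1 < n) of B_n, which acts on
  H^{\<otimes>n} by the braiding c(v \<otimes> w) = (h.w) \<otimes> v for v in H_h on the tensor
  factors j, j+1.  Invariance under B_n is invariance under all generators.
  Since the form is multilinear it suffices to test on pure tensors whose j-th
  entry is homogeneous (degree e: H_i + H_v, acting trivially; degree g: H_g,
  acting by rho).\<close>
definition braid_invariant ::
  "'h::ab_group_add set \<Rightarrow> 'h set \<Rightarrow> 'h set \<Rightarrow> ('h \<Rightarrow> 'h) \<Rightarrow> nat \<Rightarrow> ('h list \<Rightarrow> 'k) \<Rightarrow> bool" where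
  "braid_invariant Hi Hv Hg rho n f \<longleftrightarrow>
     (\<forall>j vs. Suc j < n \<longrightarrow> length vs = n \<longrightarrow>
        (vs ! j \<in> sum_sp Hi Hv \<longrightarrow>
           f (vs[j := vs ! Suc j, Suc j := vs ! j]) = f vs) \<and>
        (vs ! j \<in> Hg \<longrightarrow>
           f (vs[j := rho (vs ! Suc j), Suc j := vs ! j]) = f vs))"

definition Br_n ::
  "('k::field \<Rightarrow> 'h::ab_group_add \<Rightarrow> 'h) \<Rightarrow> 'h set \<Rightarrow> 'h set \<Rightarrow> 'h set \<Rightarrow> ('h \<Rightarrow> 'h)
    \<Rightarrow> nat \<Rightarrow> ('h list \<Rightarrow> 'k) set" where
  "Br_n scale Hi Hv Hg rho n =
     {f. multilinear_form scale n f \<and> braid_invariant Hi Hv Hg rho n f}"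

definition Br_series ::
  "('k::field \<Rightarrow> 'h::ab_group_add \<Rightarrow> 'h) \<Rightarrow> 'h set \<Rightarrow> 'h set \<Rightarrow> 'h set \<Rightarrow> ('h \<Rightarrow> 'h)
    \<Rightarrow> (nat \<Rightarrow> 'h list \<Rightarrow> 'k) set" where
  "Br_series scale Hi Hv Hg rho = {F. \<forall>n. F n \<in> Br_n scale Hi Hv Hg rho n}"

type_synonym ('p, 'k) mps = "('p \<Rightarrow> nat) \<Rightarrow> 'k"

definition mps_add :: "('p, 'k::comm_ring_1) mps \<Rightarrow> ('p, 'k) mps \<Rightarrow> ('p, 'k) mps" where
  "mps_add a b = (\<lambda>m. a m + b m)"

definition mps_mult :: "('p::finite, 'k::comm_ring_1) mps \<Rightarrow> ('p, 'k) mps \<Rightarrow> ('p, 'k) mps" where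
  "mps_mult a b = (\<lambda>m. \<Sum>m1 \<in> {m1. \<forall>p. m1 p \<le> m p}. a m1 * b (\<lambda>p. m p - m1 p))"

definition mps_X2 :: "'p \<Rightarrow> 'p \<Rightarrow> ('p, 'k::comm_ring_1) mps" where
  "mps_X2 p q = (\<lambda>m. if m = (\<lambda>r. (if r = p then 1 else 0) + (if r = q then 1 else 0))
                      then 1 else 0)"

definition mps_ideal :: "('p::finite, 'k::comm_ring_1) mps set \<Rightarrow> bool" where
  "mps_ideal J \<longleftrightarrow> (\<lambda>_. 0) \<in> J \<and> (\<forall>a\<in>J. \<forall>b\<in>J. mps_add a b \<in> J) \<and>
                   (\<forall>a\<in>J. \<forall>r. mps_mult r a \<in> J)"

definition mps_ideal_gen :: "('p::finite, 'k::comm_ring_1) mps set \<Rightarrow> ('p, 'k) mps set" where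
  "mps_ideal_gen S = \<Inter>{J. mps_ideal J \<and> S \<subseteq> J}"

definition ideal_I :: "('p::finite \<Rightarrow> 'h \<Rightarrow> 'k::field) \<Rightarrow> ('k \<Rightarrow> 'h::ab_group_add \<Rightarrow> 'h)
    \<Rightarrow> 'h set \<Rightarrow> 'h set \<Rightarrow> 'h set \<Rightarrow> ('p, 'k) mps set" where
  "ideal_I x scale Hi Hv Hg = mps_ideal_gen
     {mps_X2 p q | p q. x p \<in> dual_part scale Hi Hg \<and> x q \<in> dual_part scale Hi Hv}"

end

theory Submission
  imports Defs "HOL-Library.Multiset"
begin

text \<open>Choose vectors e_p of H dual to the basis x^p, each lying in the summand H_i, H_v or H_g
  on which x^p lives. A multilinear form is determined by its values on tuples of the e_p, i.e.
  by a coefficient function on words in the indices. Braid invariance with a degree-e vector in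
  front makes these coefficients symmetric; with a g-vector in front it moreover introduces rho,
  which is -1 on H_v, so a coefficient whose word contains both a v-index and a g-index equals its
  own negative and vanishes. Conversely every symmetric coefficient function vanishing on such
  words gives a braid-invariant form. Symmetric coefficient functions are functions of the
  monomial x^{p_1}...x^{p_n}, and those vanishing on all monomials containing some x_v^p x_g^q are
  the power series modulo the monomial ideal I.\<close>

section \<open>Adjacent transpositions\<close>

definition adj_swap :: "nat \<Rightarrow> 'a list \<Rightarrow> 'a list" where
  "adj_swap j xs = xs[j := xs ! Suc j, Suc j := xs ! j]"

lemma length_adj_swap [simp]: "length (adj_swap j xs) = length xs"
  by (simp add: adj_swap_def)

lemma adj_swap_Cons_Suc [simp]: "adj_swap (Suc j) (a # xs) = a # adj_swap j xs"
  by (simp add: adj_swap_def)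

lemma adj_swap_0 [simp]: "adj_swap 0 (a # b # xs) = b # a # xs"
  by (simp add: adj_swap_def)

lemma map_adj_swap: "Suc j < length xs \<Longrightarrow> map f (adj_swap j xs) = adj_swap j (map f xs)"
  by (simp add: adj_swap_def map_update)

lemma adj_swap_adj_swap [simp]: "Suc j < length xs \<Longrightarrow> adj_swap j (adj_swap j xs) = xs"
  by (rule nth_equalityI) (auto simp: adj_swap_def nth_list_update)

lemma mset_adj_swap [simp]: "Suc j < length xs \<Longrightarrow> mset (adj_swap j xs) = mset xs"
  using mset_swap[of "Suc j" xs j] by (simp add: adj_swap_def)

lemma adj_swap_invariant_Cons:
  assumes "\<And>j xs. Suc j < length xs \<Longrightarrow> g (adj_swap j xs) = g xs"
  shows "Suc j < length xs \<Longrightarrow> g (a # adj_swap j xs) = g (a # xs)"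
  using assms[of "Suc j" "a # xs"] by simp

lemma adj_swap_invariant_move_front:
  assumes "\<And>j xs. Suc j < length xs \<Longrightarrow> g (adj_swap j xs) = g xs"
  shows "g (as @ b # bs) = g (b # as @ bs)"
  using assms
proof (induction as arbitrary: g)
  case (Cons a as)
  have "g (a # as @ b # bs) = g (a # b # as @ bs)"
    by (rule Cons.IH[of "\<lambda>ys. g (a # ys)", simplified])
      (rule adj_swap_invariant_Cons[where g = g, OF Cons.prems])
  also have "\<dots> = g (b # a # as @ bs)"
    using Cons.prems[of 0 "a # b # as @ bs"] by simp
  finally show ?case by simp
qed simp

lemma adj_swap_invariant_imp_mset_invariant:
  assumes "\<And>j xs. Suc j < length xs \<Longrightarrow> g (adj_swap j xs) = g xs"
    and "mset xs = mset ys"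
  shows "g xs = g ys"
  using assms
proof (induction xs arbitrary: g ys)
  case (Cons a xs)
  obtain as bs where ys: "ys = as @ a # bs"
    using Cons.prems(2) split_list[of a ys] by (metis list.set_intros(1) set_mset_mset)
  then have "mset xs = mset (as @ bs)" using Cons.prems(2) by simp
  then have "g (a # xs) = g (a # as @ bs)"
    by (rule Cons.IH[of "\<lambda>ys. g (a # ys)", simplified, rotated])
      (rule adj_swap_invariant_Cons[where g = g, OF Cons.prems(1)])
  also have "\<dots> = g ys"
    unfolding ys by (rule adj_swap_invariant_move_front[where g = g, OF Cons.prems(1), symmetric])
  finally show ?case .
qed simp

lemma surj_count_mset: "surj (\<lambda>xs. count (mset xs) :: 'a::finite \<Rightarrow> nat)"
proof -
  have "m \<in> range (\<lambda>xs. count (mset xs))" for m :: "'a \<Rightarrow> nat"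
  proof -
    obtain xs where "mset xs = Abs_multiset m" using ex_mset by blast
    then have "count (mset xs) = m" by simp
    then show ?thesis by blast
  qed
  then show ?thesis by blast
qed

section \<open>Monomial ideals generated by quadratic monomials\<close>

definition monomial_avoids :: "('p \<Rightarrow> 'p \<Rightarrow> bool) \<Rightarrow> ('p \<Rightarrow> nat) \<Rightarrow> bool" where
  "monomial_avoids R m \<longleftrightarrow> (\<forall>p q. R p q \<longrightarrow> m p = 0 \<or> m q = 0)"

definition vanishing_on_avoiding :: "('p \<Rightarrow> 'p \<Rightarrow> bool) \<Rightarrow> ('p, 'k::comm_ring_1) mps set" where
  "vanishing_on_avoiding R = {a. \<forall>m. monomial_avoids R m \<longrightarrow> a m = 0}"

definition exponent_X2 :: "'p \<Rightarrow> 'p \<Rightarrow> 'p \<Rightarrow> nat" where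
  "exponent_X2 p q = (\<lambda>r. (if r = p then 1 else 0) + (if r = q then 1 else 0))"

lemma mps_X2_eq: "mps_X2 p q m = (if m = exponent_X2 p q then 1 else 0)"
  by (simp add: mps_X2_def exponent_X2_def)

lemma finite_monomials_below: "finite {m1 :: 'p::finite \<Rightarrow> nat. \<forall>p. m1 p \<le> m p}"
proof -
  have "{m1. \<forall>p. m1 p \<le> m p} \<subseteq> {f. \<forall>p. (p \<in> UNIV \<longrightarrow> f p \<in> {..Max (range m)}) \<and> (p \<notin> UNIV \<longrightarrow> f p = 0)}"
    by (auto intro: order_trans Max_ge)
  moreover have "finite \<dots>" by (rule finite_set_of_finite_funs) auto
  ultimately show ?thesis by (rule finite_subset)
qed

lemma mps_ideal_vanishing_on_avoiding: "mps_ideal (vanishing_on_avoiding R :: ('p::finite, 'k::comm_ring_1) mps set)"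
  unfolding mps_ideal_def
proof (intro conjI ballI allI)
  fix a r :: "('p, 'k) mps" assume a: "a \<in> vanishing_on_avoiding R"
  have "monomial_avoids R (\<lambda>p. m p - m1 p)" if "monomial_avoids R m" for m m1 :: "'p \<Rightarrow> nat"
    using that unfolding monomial_avoids_def by (metis diff_is_0_eq' zero_le)
  then show "mps_mult r a \<in> vanishing_on_avoiding R"
    using a by (simp add: vanishing_on_avoiding_def mps_mult_def)
qed (auto simp: vanishing_on_avoiding_def mps_add_def)

lemma mps_X2_vanishing_on_avoiding: "R p q \<Longrightarrow> mps_X2 p q \<in> vanishing_on_avoiding R"
  by (auto simp: vanishing_on_avoiding_def monomial_avoids_def mps_X2_eq exponent_X2_def)

lemma mps_ideal_sum:
  assumes "mps_ideal J" "finite P" "\<And>t. t \<in> P \<Longrightarrow> T t \<in> J"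
  shows "(\<lambda>m. \<Sum>t\<in>P. T t m) \<in> J"
  using assms(2,3)
proof (induction P rule: finite_induct)
  case (insert t P)
  then have "(\<lambda>m. \<Sum>t\<in>insert t P. T t m) = mps_add (T t) (\<lambda>m. \<Sum>t\<in>P. T t m)"
    by (simp add: mps_add_def)
  with insert assms(1) show ?case by (simp add: mps_ideal_def)
qed (use assms(1) in \<open>simp add: mps_ideal_def\<close>)

lemma mps_mult_X2:
  "mps_mult r (mps_X2 p q) m =
     (if exponent_X2 p q \<le> m then r (\<lambda>s. m s - exponent_X2 p q s) else 0)"
proof -
  let ?d = "exponent_X2 p q"
  have shift: "(\<lambda>s. m s - m1 s) = ?d \<longleftrightarrow> ?d \<le> m \<and> m1 = (\<lambda>s. m s - ?d s)"
    if "\<forall>s. m1 s \<le> m s" for m1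
    using that by (auto simp: fun_eq_iff le_fun_def) (metis diff_le_self, metis diff_diff_cancel)
  have "mps_mult r (mps_X2 p q) m =
      (\<Sum>m1 \<in> {m1. \<forall>s. m1 s \<le> m s}. if ?d \<le> m \<and> m1 = (\<lambda>s. m s - ?d s) then r m1 else 0)"
    unfolding mps_mult_def mps_X2_eq by (rule sum.cong) (simp_all add: shift)
  then show ?thesis
    using finite_monomials_below[of m] by auto
qed

lemma vanishing_on_avoiding_subset_ideal:
  assumes "mps_ideal J" "\<And>p q. R p q \<Longrightarrow> mps_X2 p q \<in> J" "\<And>p. \<not> R p p"
  shows "vanishing_on_avoiding R \<subseteq> (J :: ('p::finite, 'k::comm_ring_1) mps set)"
proof
  fix a :: "('p, 'k) mps" assume a: "a \<in> vanishing_on_avoiding R"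
  define P where "P = {pq. R (fst pq) (snd pq)}"
  txt \<open>Every monomial not avoiding R is charged to one chosen pair sel m; this writes a as a
    finite sum of multiples of the generators.\<close>
  define sel where "sel m = (SOME pq. pq \<in> P \<and> m (fst pq) \<noteq> 0 \<and> m (snd pq) \<noteq> 0)"
    for m :: "'p \<Rightarrow> nat"
  define T where "T pq = mps_mult (\<lambda>m'. let m = (\<lambda>s. m' s + exponent_X2 (fst pq) (snd pq) s)
      in if sel m = pq then a m else 0) (mps_X2 (fst pq) (snd pq))" for pq
  have T: "T t m = (if exponent_X2 (fst t) (snd t) \<le> m \<and> sel m = t then a m else 0)" for t m
  proof -
    have "exponent_X2 (fst t) (snd t) \<le> m \<Longrightarrow>
        (\<lambda>s. m s - exponent_X2 (fst t) (snd t) s + exponent_X2 (fst t) (snd t) s) = m"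
      by (simp add: le_fun_def)
    then show ?thesis by (simp add: T_def mps_mult_X2)
  qed
  have "a m = (\<Sum>t\<in>P. T t m)" for m
  proof (cases "monomial_avoids R m")
    case True
    then have "a m = 0" using a by (simp add: vanishing_on_avoiding_def)
    then show ?thesis unfolding T by (simp only: if_cancel sum.neutral_const)
  next
    case False
    then have "\<exists>pq. pq \<in> P \<and> m (fst pq) \<noteq> 0 \<and> m (snd pq) \<noteq> 0"
      by (auto simp: monomial_avoids_def P_def)
    then have sel: "sel m \<in> P" "m (fst (sel m)) \<noteq> 0" "m (snd (sel m)) \<noteq> 0"
      unfolding sel_def by (metis (mono_tags, lifting) someI_ex)+
    then have "exponent_X2 (fst (sel m)) (snd (sel m)) \<le> m"
      using assms(3) by (auto simp: le_fun_def exponent_X2_def P_def)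
    then have "T t m = (if t = sel m then a m else 0)" for t
      by (auto simp: T)
    then show ?thesis using sel(1) by (simp add: P_def)
  qed
  then have "a = (\<lambda>m. \<Sum>t\<in>P. T t m)" by (rule ext)
  moreover have "(\<lambda>m. \<Sum>t\<in>P. T t m) \<in> J"
    using assms(1,2) by (intro mps_ideal_sum) (auto simp: P_def T_def mps_ideal_def)
  ultimately show "a \<in> J" by simp
qed

lemma mps_ideal_gen_X2_eq_vanishing_on_avoiding:
  assumes "\<And>p. \<not> R p p"
  shows "mps_ideal_gen {mps_X2 p q | p q. R p q} = (vanishing_on_avoiding R :: ('p::finite, 'k::comm_ring_1) mps set)"
proof
  show "mps_ideal_gen {mps_X2 p q | p q. R p q} \<subseteq> vanishing_on_avoiding R"
    unfolding mps_ideal_gen_def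
    by (rule Inter_lower) (auto intro: mps_ideal_vanishing_on_avoiding mps_X2_vanishing_on_avoiding)
  show "vanishing_on_avoiding R \<subseteq> mps_ideal_gen {mps_X2 p q | p q. R p q}"
    unfolding mps_ideal_gen_def using vanishing_on_avoiding_subset_ideal[of _ R] assms by blast
qed

section \<open>Multilinear forms in coordinates of a dual basis\<close>

lemma sum_lists_length_Suc:
  "(\<Sum>qs | length qs = Suc n. F qs) = (\<Sum>p\<in>UNIV. \<Sum>ps | length ps = n. F (p # ps :: 'p::finite list))"
proof -
  have "{qs :: 'p list. length qs = Suc n} = case_prod (#) ` (UNIV \<times> {ps. length ps = n})"
    by (auto simp: length_Suc_conv)
  moreover have "inj_on (case_prod (#)) (UNIV \<times> {ps :: 'p list. length ps = n})"
    by (auto simp: inj_on_def)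
  ultimately show ?thesis
    by (simp add: sum.reindex sum.cartesian_product case_prod_unfold)
qed

locale finite_dual_basis = vector_space scale
  for scale :: "'k::field \<Rightarrow> 'h::ab_group_add \<Rightarrow> 'h" +
  fixes x :: "'p::finite \<Rightarrow> 'h \<Rightarrow> 'k"
  assumes finite_dim: "\<exists>B. finite B \<and> span B = UNIV"
    and dual_basis: "dual_basis scale x"
begin

sublocale vector_space_pair scale "(*)"
  by unfold_locales (simp_all add: algebra_simps)

abbreviation linear_functional :: "('h \<Rightarrow> 'k) \<Rightarrow> bool" where
  "linear_functional \<equiv> Vector_Spaces.linear scale (*)"

lemma linear_x: "linear_functional (x p)"
  using dual_basis by (simp add: dual_basis_def)

lemma linear_combination_x: "linear_functional (\<lambda>h. \<Sum>p\<in>UNIV. c p * x p h)"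
  by (intro linear_compose_sum ballI linear_compose_scale_right linear_x)

lemma dual_basis_expansion: "linear_functional f \<Longrightarrow> \<exists>c. f = (\<lambda>h. \<Sum>p\<in>UNIV. c p * x p h)"
  using dual_basis by (auto simp: dual_basis_def)

lemma dual_basis_coeffs_unique:
  "(\<lambda>h. \<Sum>p\<in>UNIV. c p * x p h) = (\<lambda>h. \<Sum>p\<in>UNIV. c' p * x p h) \<Longrightarrow> c = c'"
  using dual_basis linear_combination_x[of c] unfolding dual_basis_def by blast

lemma ex_dual_vectors: "\<exists>e. \<forall>p q. x q (e p) = (if q = p then 1 else 0)"
proof -
  obtain S where S: "finite S" "span S = UNIV" using finite_dim by blast
  obtain B where "independent B" "UNIV \<subseteq> span B"
    using basis_exists[of UNIV] by blast
  then have B: "independent B" "span B = UNIV" by auto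
  have "finite B" using independent_span_bound[OF S(1) B(1)] S(2) by simp
  define r where "r b = (\<lambda>h. representation B h b)" for b
  have "linear_functional (r b)" for b
    unfolding r_def by (rule linear_representation[OF B])
  then have "\<forall>b. \<exists>c. r b = (\<lambda>h. \<Sum>p\<in>UNIV. c p * x p h)"
    using dual_basis_expansion by blast
  then obtain C where C: "\<And>b. r b = (\<lambda>h. \<Sum>p\<in>UNIV. C b p * x p h)"
    by (auto simp: choice_iff)
  have "(\<lambda>p. \<Sum>b\<in>B. x q b * C b p) = (\<lambda>p. if q = p then 1 else 0)" for q
  proof (rule dual_basis_coeffs_unique)
    have "x q = (\<lambda>h. \<Sum>p\<in>UNIV. (\<Sum>b\<in>B. x q b * C b p) * x p h)"
    proof
      fix h
      have "(\<Sum>b\<in>B. scale (r b h) b) = h"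
        using sum_representation_eq[OF B(1) _ \<open>finite B\<close> subset_refl, of h] B(2) by (simp add: r_def)
      then have "x q h = x q (\<Sum>b\<in>B. scale (r b h) b)" by simp
      also have "\<dots> = (\<Sum>b\<in>B. x q b * r b h)"
        unfolding linear_sum[OF linear_x] linear_scale[OF linear_x] by (simp only: mult.commute)
      also have "\<dots> = (\<Sum>b\<in>B. \<Sum>p\<in>UNIV. x q b * C b p * x p h)"
        \<comment> \<open>plain simp loops: the module rule scale_scale for (*) undoes mult.assoc\<close>
        by (simp only: C sum_distrib_left mult.assoc)
      also have "\<dots> = (\<Sum>p\<in>UNIV. (\<Sum>b\<in>B. x q b * C b p) * x p h)"
        by (subst sum.swap) (simp add: sum_distrib_right)
      finally show "x q h = (\<Sum>p\<in>UNIV. (\<Sum>b\<in>B. x q b * C b p) * x p h)" .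
    qed
    moreover have "x q = (\<lambda>h. \<Sum>p\<in>UNIV. (if q = p then 1 else 0) * x p h)"
      by (simp add: if_distrib[of "\<lambda>c. c * _"] cong: if_cong)
    ultimately show "(\<lambda>h. \<Sum>p\<in>UNIV. (\<Sum>b\<in>B. x q b * C b p) * x p h) =
        (\<lambda>h. \<Sum>p\<in>UNIV. (if q = p then 1 else 0) * x p h)"
      by (rule trans[OF sym])
  qed
  then have "x q (\<Sum>b\<in>B. scale (C b p) b) = (if q = p then 1 else 0)" for p q
    unfolding linear_sum[OF linear_x] linear_scale[OF linear_x] by (simp only: mult.commute fun_eq_iff)
  then show ?thesis by (intro exI[of _ "\<lambda>p. \<Sum>b\<in>B. scale (C b p) b"]) simp
qed

definition tensor_x :: "'p list \<Rightarrow> 'h list \<Rightarrow> 'k" where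
  "tensor_x ps vs = (\<Prod>i<length ps. x (ps ! i) (vs ! i))"

definition form_of_coeffs :: "('p list \<Rightarrow> 'k) \<Rightarrow> nat \<Rightarrow> 'h list \<Rightarrow> 'k" where
  "form_of_coeffs c n vs =
     (if length vs = n then \<Sum>ps | length ps = n. c ps * tensor_x ps vs else 0)"

lemma tensor_x_Cons: "tensor_x (p # ps) (v # vs) = x p v * tensor_x ps vs"
  by (simp only: tensor_x_def length_Cons prod.lessThan_Suc_shift nth_Cons_0 nth_Cons_Suc)

lemma tensor_x_update:
  assumes "length ps = length vs" "j < length vs"
  shows "tensor_x ps (vs[j := v]) = (\<Prod>i\<in>{..<length ps} - {j}. x (ps ! i) (vs ! i)) * x (ps ! j) v"
  unfolding tensor_x_def using assms
  by (subst prod.remove[of _ j]) (auto simp: mult.commute intro!: prod.cong)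

lemma linear_tensor_x_update:
  "length ps = length vs \<Longrightarrow> j < length vs \<Longrightarrow> linear_functional (\<lambda>v. tensor_x ps (vs[j := v]))"
  by (simp add: tensor_x_update linear_compose_scale_right linear_x)

lemma form_of_coeffs_cong:
  "(\<And>ps. length ps = n \<Longrightarrow> c ps = c' ps) \<Longrightarrow> form_of_coeffs c n = form_of_coeffs c' n"
  by (auto simp: form_of_coeffs_def fun_eq_iff intro!: sum.cong)

lemma multilinear_form_slot:
  "multilinear_form scale n f \<Longrightarrow> length vs = n \<Longrightarrow> j < n \<Longrightarrow>
    linear_functional (\<lambda>v. f (vs[j := v]))"
  by (simp add: multilinear_form_def)

lemma multilinear_form_of_coeffs: "multilinear_form scale n (form_of_coeffs c n)"
  unfolding multilinear_form_def
proof (intro conjI allI impI)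
  fix vs :: "'h list" and j assume "length vs = n" "j < n"
  then show "linear_functional (\<lambda>v. form_of_coeffs c n (vs[j := v]))"
    by (auto simp: form_of_coeffs_def
        intro!: linear_compose_sum linear_compose_scale_right linear_tensor_x_update)
qed (simp add: form_of_coeffs_def)

lemma tensor_x_adj_swap:
  assumes "length ps = length vs" "Suc j < length vs"
  shows "tensor_x ps (adj_swap j vs) = tensor_x (adj_swap j ps) vs"
  unfolding tensor_x_def using assms
  by (intro prod.reindex_bij_witness[of _ "\<lambda>i. if i = j then Suc j else if i = Suc j then j else i"
        "\<lambda>i. if i = j then Suc j else if i = Suc j then j else i"])
    (auto simp: adj_swap_def nth_list_update)

lemma form_of_coeffs_adj_swap:
  assumes "\<And>ps. length ps = n \<Longrightarrow> c (adj_swap j ps) = c ps" "Suc j < length vs"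
  shows "form_of_coeffs c n (adj_swap j vs) = form_of_coeffs c n vs"
proof (cases "length vs = n")
  case True
  have "(\<Sum>ps | length ps = n. c ps * tensor_x ps (adj_swap j vs)) =
      (\<Sum>ps | length ps = n. c (adj_swap j ps) * tensor_x (adj_swap j ps) vs)"
    using assms True by (intro sum.cong) (simp_all add: tensor_x_adj_swap)
  also have "\<dots> = (\<Sum>ps | length ps = n. c ps * tensor_x ps vs)"
    using True assms(2)
    by (intro sum.reindex_bij_witness[of _ "adj_swap j" "adj_swap j"]) auto
  finally show ?thesis by (simp add: form_of_coeffs_def)
qed (simp add: form_of_coeffs_def)

context
  fixes e :: "'p \<Rightarrow> 'h"
  assumes dual: "\<And>p q. x q (e p) = (if q = p then 1 else 0)"
begin

lemma linear_functional_expansion: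
  assumes "linear_functional f"
  shows "f v = (\<Sum>p\<in>UNIV. f (e p) * x p v)"
proof -
  obtain c where c: "f = (\<lambda>h. \<Sum>p\<in>UNIV. c p * x p h)"
    using dual_basis_expansion[OF assms] by blast
  then have "f (e q) = c q" for q
    by (simp add: dual if_distrib[of "\<lambda>t. _ * t"] cong: if_cong)
  then show ?thesis using c by simp
qed

lemma tensor_x_dual:
  "length ps = length qs \<Longrightarrow> tensor_x ps (map e qs) = (if ps = qs then 1 else 0)"
proof (induction ps arbitrary: qs)
  case (Cons p ps)
  then obtain q qs' where "qs = q # qs'" by (cases qs) auto
  with Cons show ?case by (simp add: tensor_x_Cons dual)
qed (simp add: tensor_x_def)

lemma form_of_coeffs_dual: "form_of_coeffs c (length qs) (map e qs) = c qs"
  by (simp add: form_of_coeffs_def tensor_x_dual if_distrib[of "\<lambda>t. _ * t"] finite_list_length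
      cong: if_cong)

lemma multilinear_expansion:
  assumes f: "multilinear_form scale n f"
  shows "length (us @ ws) = n \<Longrightarrow>
    f (us @ ws) = (\<Sum>ps | length ps = length ws. f (us @ map e ps) * tensor_x ps ws)"
proof (induction ws arbitrary: us)
  case Nil
  have "{ps :: 'p list. length ps = 0} = {[]}" by auto
  then show ?case by (simp add: tensor_x_def)
next
  case (Cons w ws)
  have slot: "f (us @ w # map e ps) = (\<Sum>p\<in>UNIV. f (us @ e p # map e ps) * x p w)"
    if "length ps = length ws" for ps
  proof -
    have "linear_functional (\<lambda>v. f ((us @ w # map e ps)[length us := v]))"
      using multilinear_form_slot[OF f, of "us @ w # map e ps" "length us"] Cons.prems that by simp
    from linear_functional_expansion[OF this, of w] show ?thesis by simp
  qed
  have "f (us @ w # ws) = (\<Sum>ps | length ps = length ws. f (us @ w # map e ps) * tensor_x ps ws)"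
    using Cons.IH[of "us @ [w]"] Cons.prems by simp
  also have "\<dots> = (\<Sum>ps | length ps = length ws. \<Sum>p\<in>UNIV.
      f (us @ map e (p # ps)) * tensor_x (p # ps) (w # ws))"
    by (rule sum.cong[OF refl])
      (simp only: mem_Collect_eq slot sum_distrib_right tensor_x_Cons mult.assoc list.map)
  also have "\<dots> = (\<Sum>qs | length qs = length (w # ws). f (us @ map e qs) * tensor_x qs (w # ws))"
    by (subst sum.swap) (simp add: sum_lists_length_Suc)
  finally show ?case .
qed

lemma multilinear_form_eq_form_of_coeffs:
  assumes "multilinear_form scale n f"
  shows "f = form_of_coeffs (\<lambda>ps. f (map e ps)) n"
proof
  fix vs :: "'h list"
  show "f vs = form_of_coeffs (\<lambda>ps. f (map e ps)) n vs"
    using assms multilinear_expansion[OF assms, of "[]" vs]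
    by (auto simp: form_of_coeffs_def multilinear_form_def)
qed

end

end

section \<open>Braid-invariant forms for the Z/2-graded Z/2-module\<close>

lemma braid_invariant_swap:
  assumes "braid_invariant Hi Hv Hg rho n f" "length vs = n" "Suc j < n" "vs ! j \<in> sum_sp Hi Hv"
  shows "f (adj_swap j vs) = f vs"
  using assms unfolding braid_invariant_def adj_swap_def by blast

lemma braid_invariant_rho:
  assumes "braid_invariant Hi Hv Hg rho n f" "length vs = n" "Suc j < n" "vs ! j \<in> Hg"
  shows "f (vs[j := rho (vs ! Suc j), Suc j := vs ! j]) = f vs"
  using assms unfolding braid_invariant_def by blast

locale homogeneous_dual_basis = finite_dual_basis scale x
  for scale :: "'k::field_char_0 \<Rightarrow> 'h::ab_group_add \<Rightarrow> 'h" and x :: "'p::finite \<Rightarrow> 'h \<Rightarrow> 'k" +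
  fixes Hi Hv Hg :: "'h set" and rho :: "'h \<Rightarrow> 'h"
  assumes subspace_i: "subspace Hi"
    and subspace_v: "subspace Hv"
    and direct_sum: "direct_sum3 Hi Hv Hg"
    and linear_rho: "Vector_Spaces.linear scale scale rho"
    and rho_i: "\<forall>h\<in>Hi. rho h = h"
    and rho_v: "\<forall>h\<in>Hv. rho h = - h"
    and rho_g: "\<forall>h\<in>Hg. rho h = h"
    and homogeneous: "\<forall>p. x p \<in> dual_part scale Hv Hg \<or> x p \<in> dual_part scale Hi Hg
                    \<or> x p \<in> dual_part scale Hi Hv"
begin

interpretation rho: Vector_Spaces.linear scale scale rho by (rule linear_rho)

text \<open>dual_part scale A B is the dual of the third summand, so these say that x^p lies in
  H_i^*, H_v^*, H_g^* respectively.\<close>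

definition i_index :: "'p \<Rightarrow> bool" where "i_index p \<longleftrightarrow> x p \<in> dual_part scale Hv Hg"
definition v_index :: "'p \<Rightarrow> bool" where "v_index p \<longleftrightarrow> x p \<in> dual_part scale Hi Hg"
definition g_index :: "'p \<Rightarrow> bool" where "g_index p \<longleftrightarrow> x p \<in> dual_part scale Hi Hv"

lemma decomposition:
  obtains a b c where "a \<in> Hi" "b \<in> Hv" "c \<in> Hg" "h = a + b + c"
  using direct_sum unfolding direct_sum3_def by blast

lemma x_nonzero: "x p \<noteq> (\<lambda>_. 0)"
proof
  assume "x p = (\<lambda>_. 0)"
  then have "(\<lambda>h. \<Sum>q\<in>UNIV. (if q = p then 1 else 0) * x q h) = (\<lambda>h. \<Sum>q\<in>UNIV. 0 * x q h)"
    by (simp add: if_distrib[of "\<lambda>c. c * _"] cong: if_cong)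
  from dual_basis_coeffs_unique[OF this] show False by (metis one_neq_zero)
qed

lemma index_cases:
  obtains (i) "i_index p" "\<not> v_index p" "\<not> g_index p"
    | (v) "v_index p" "\<not> i_index p" "\<not> g_index p"
    | (g) "g_index p" "\<not> i_index p" "\<not> v_index p"
proof -
  have "x p = (\<lambda>_. 0)" if "\<forall>h \<in> Hi \<union> Hv \<union> Hg. x p h = 0"
  proof
    fix h
    obtain a b c where "a \<in> Hi" "b \<in> Hv" "c \<in> Hg" "h = a + b + c" by (rule decomposition)
    with that show "x p h = 0" by (simp add: linear_add[OF linear_x])
  qed
  then have "\<not> (i_index p \<and> v_index p) \<and> \<not> (i_index p \<and> g_index p) \<and> \<not> (v_index p \<and> g_index p)"
    using x_nonzero unfolding i_index_def v_index_def g_index_def dual_part_def by blast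
  moreover have "i_index p \<or> v_index p \<or> g_index p"
    using homogeneous unfolding i_index_def v_index_def g_index_def by blast
  ultimately show thesis using that by blast
qed

lemma x_components:
  assumes "a \<in> Hi" "b \<in> Hv" "c \<in> Hg"
  shows "x q a = (if i_index q then x q (a + b + c) else 0)"
    and "x q b = (if v_index q then x q (a + b + c) else 0)"
    and "x q c = (if g_index q then x q (a + b + c) else 0)"
  using assms by (cases q rule: index_cases;
      simp add: linear_add[OF linear_x] i_index_def v_index_def g_index_def dual_part_def)+

lemma ex_homogeneous_dual_vectors:
  "\<exists>e. (\<forall>p q. x q (e p) = (if q = p then 1 else 0)) \<and>
     (\<forall>p. (i_index p \<longrightarrow> e p \<in> Hi) \<and> (v_index p \<longrightarrow> e p \<in> Hv) \<and> (g_index p \<longrightarrow> e p \<in> Hg))"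
proof -
  obtain e0 where e0: "\<And>p q. x q (e0 p) = (if q = p then 1 else 0)"
    using ex_dual_vectors by blast
  have "\<forall>p. \<exists>a b c. a \<in> Hi \<and> b \<in> Hv \<and> c \<in> Hg \<and> e0 p = a + b + c"
    using decomposition by metis
  then obtain A B C where ABC: "\<And>p. A p \<in> Hi" "\<And>p. B p \<in> Hv" "\<And>p. C p \<in> Hg"
    "\<And>p. e0 p = A p + B p + C p"
    by metis
  define e where "e p = (if v_index p then B p else if g_index p then C p else A p)" for p
  have x_ABC: "x q (A p) = (if i_index q \<and> q = p then 1 else 0)"
    "x q (B p) = (if v_index q \<and> q = p then 1 else 0)"
    "x q (C p) = (if g_index q \<and> q = p then 1 else 0)" for p q
    using x_components[OF ABC(1)[of p] ABC(2)[of p] ABC(3)[of p], of q]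
    by (auto simp: ABC(4)[symmetric] e0)
  have "x q (e p) = (if q = p then 1 else 0)" for p q
    by (cases p rule: index_cases; cases q rule: index_cases) (auto simp: e_def x_ABC)
  moreover have "(i_index p \<longrightarrow> e p \<in> Hi) \<and> (v_index p \<longrightarrow> e p \<in> Hv) \<and> (g_index p \<longrightarrow> e p \<in> Hg)" for p
    using ABC(1-3) by (cases p rule: index_cases) (auto simp: e_def)
  ultimately show ?thesis by blast
qed

definition dual_vec :: "'p \<Rightarrow> 'h" where
  "dual_vec = (SOME e. (\<forall>p q. x q (e p) = (if q = p then 1 else 0)) \<and>
     (\<forall>p. (i_index p \<longrightarrow> e p \<in> Hi) \<and> (v_index p \<longrightarrow> e p \<in> Hv) \<and> (g_index p \<longrightarrow> e p \<in> Hg)))"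

lemma
  shows x_dual_vec: "\<And>p q. x q (dual_vec p) = (if q = p then 1 else 0)"
    and dual_vec_i: "i_index p \<Longrightarrow> dual_vec p \<in> Hi"
    and dual_vec_v: "v_index p \<Longrightarrow> dual_vec p \<in> Hv"
    and dual_vec_g: "g_index p \<Longrightarrow> dual_vec p \<in> Hg"
  using someI_ex[OF ex_homogeneous_dual_vectors] unfolding dual_vec_def by blast+

lemma x_rho: "\<not> v_index q \<Longrightarrow> x q (rho w) = x q w"
proof -
  assume q: "\<not> v_index q"
  obtain a b c where abc: "a \<in> Hi" "b \<in> Hv" "c \<in> Hg" "w = a + b + c" by (rule decomposition)
  then have "rho w = a + - b + c" using rho_i rho_v rho_g by (simp add: rho.add)
  moreover have "x q b = 0" using x_components(2)[OF abc(1-3)] q by simp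
  ultimately show ?thesis
    using abc(4) by (simp add: linear_add[OF linear_x] linear_diff[OF linear_x])
qed

lemma rho_dual_vec: "rho (dual_vec q) = (if v_index q then - dual_vec q else dual_vec q)"
  using rho_i rho_v rho_g dual_vec_i dual_vec_v dual_vec_g by (cases q rule: index_cases) auto

lemma dual_vec_sum_sp:
  assumes "\<not> g_index q"
  shows "dual_vec q \<in> sum_sp Hi Hv"
proof (cases q rule: index_cases)
  case i
  then have "dual_vec q = dual_vec q + 0" "0 \<in> Hv" using dual_vec_i subspace_v by (simp_all add: subspace_0)
  then show ?thesis using dual_vec_i[OF i(1)] unfolding sum_sp_def by blast
next
  case v
  then have "dual_vec q = 0 + dual_vec q" "0 \<in> Hi" using dual_vec_v subspace_i by (simp_all add: subspace_0)
  then show ?thesis using dual_vec_v[OF v(1)] unfolding sum_sp_def by blast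
qed (use assms in simp)

definition vg_pair :: "'p \<Rightarrow> 'p \<Rightarrow> bool" where
  "vg_pair p q \<longleftrightarrow> v_index p \<and> g_index q"

lemma not_vg_pair_refl: "\<not> vg_pair p p"
  by (cases p rule: index_cases) (auto simp: vg_pair_def)

lemma form_of_coeffs_rho:
  assumes c: "\<And>ps. \<not> monomial_avoids vg_pair (count (mset ps)) \<Longrightarrow> c ps = 0"
    and vs: "length vs = n" "Suc j < n" "vs ! j \<in> Hg"
  shows "form_of_coeffs c n (vs[Suc j := rho (vs ! Suc j)]) = form_of_coeffs c n vs"
proof -
  have "c ps * tensor_x ps (vs[Suc j := rho (vs ! Suc j)]) = c ps * tensor_x ps vs"
    if ps: "length ps = n" for ps
  proof (cases "x (ps ! j) (vs ! j) = 0 \<or> c ps = 0")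
    case True
    have "tensor_x ps ws = 0" if "x (ps ! j) (ws ! j) = 0" for ws
      unfolding tensor_x_def using that ps vs(2) by (intro prod_zero) auto
    then show ?thesis using True by auto
  next
    case False
    then have "g_index (ps ! j)"
      using vs(3) by (cases "ps ! j" rule: index_cases) (auto simp: i_index_def v_index_def dual_part_def)
    txt \<open>so slot j+1 carries no v-index, and rho is invisible to the dual vector there\<close>
    then have "\<not> v_index (ps ! Suc j)"
      using c[of ps] False ps vs(2)
      by (auto simp: monomial_avoids_def vg_pair_def) (metis Suc_lessD nth_mem)
    then show ?thesis
      using ps vs by (auto simp: tensor_x_def x_rho nth_list_update intro!: prod.cong)
  qed
  then show ?thesis using vs(1) unfolding form_of_coeffs_def by (auto intro!: sum.cong)
qed

lemma form_of_coeffs_braid_invariant: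
  assumes sym: "\<And>ps qs. mset ps = mset qs \<Longrightarrow> c ps = c qs"
    and c: "\<And>ps. \<not> monomial_avoids vg_pair (count (mset ps)) \<Longrightarrow> c ps = 0"
  shows "braid_invariant Hi Hv Hg rho n (form_of_coeffs c n)"
  unfolding braid_invariant_def
proof (intro allI impI conjI)
  fix j and vs :: "'h list" assume j: "Suc j < n" and vs: "length vs = n"
  then have swap: "form_of_coeffs c n (adj_swap j ws) = form_of_coeffs c n ws" if "length ws = n" for ws
    using that by (intro form_of_coeffs_adj_swap sym) auto
  then show "form_of_coeffs c n (vs[j := vs ! Suc j, Suc j := vs ! j]) = form_of_coeffs c n vs"
    using vs by (simp add: adj_swap_def)
  assume "vs ! j \<in> Hg"
  moreover have "vs[j := rho (vs ! Suc j), Suc j := vs ! j] = adj_swap j (vs[Suc j := rho (vs ! Suc j)])"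
    using j vs by (auto simp: adj_swap_def nth_list_update intro: nth_equalityI)
  ultimately show "form_of_coeffs c n (vs[j := rho (vs ! Suc j), Suc j := vs ! j]) = form_of_coeffs c n vs"
    using j vs swap form_of_coeffs_rho[OF c] by simp
qed

lemma Br_n_dual_vec_adj_swap:
  assumes f: "f \<in> Br_n scale Hi Hv Hg rho n" and j: "Suc j < length ps"
  shows "f (map dual_vec (adj_swap j ps)) = f (map dual_vec ps)"
proof (cases "length ps = n")
  case False
  then show ?thesis using f by (simp add: Br_n_def multilinear_form_def)
next
  case True
  let ?vs = "map dual_vec ps"
  have bi: "braid_invariant Hi Hv Hg rho n f" using f by (simp add: Br_n_def)
  have swap: "map dual_vec (adj_swap j ps) = adj_swap j ?vs" using j by (rule map_adj_swap)
  show ?thesis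
  proof (cases "g_index (ps ! j) \<and> v_index (ps ! Suc j)")
    case True
    txt \<open>Here only the inverse swap, which has the v-vector in front, is a plain transposition.\<close>
    then have "adj_swap j ?vs ! j \<in> sum_sp Hi Hv"
      using j dual_vec_sum_sp[of "ps ! Suc j"] by (cases "ps ! Suc j" rule: index_cases)
        (auto simp: adj_swap_def nth_list_update)
    then have "f (adj_swap j (adj_swap j ?vs)) = f (adj_swap j ?vs)"
      using j \<open>length ps = n\<close> by (intro braid_invariant_swap[OF bi]) auto
    then show ?thesis using j swap by simp
  next
    case False
    show ?thesis
    proof (cases "g_index (ps ! j)")
      case True
      with False have "rho (dual_vec (ps ! Suc j)) = dual_vec (ps ! Suc j)"
        by (simp add: rho_dual_vec)
      moreover have "f (?vs[j := rho (?vs ! Suc j), Suc j := ?vs ! j]) = f ?vs"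
        using True j \<open>length ps = n\<close> dual_vec_g by (intro braid_invariant_rho[OF bi]) auto
      ultimately show ?thesis using j swap by (simp add: adj_swap_def)
    next
      case False
      then have "f (adj_swap j ?vs) = f ?vs"
        using j \<open>length ps = n\<close> dual_vec_sum_sp by (intro braid_invariant_swap[OF bi]) auto
      then show ?thesis using swap by simp
    qed
  qed
qed

lemma Br_n_dual_vec_gv:
  assumes f: "f \<in> Br_n scale Hi Hv Hg rho n" and j: "Suc j < length ps"
    and gv: "g_index (ps ! j)" "v_index (ps ! Suc j)"
  shows "f (map dual_vec ps) = 0"
proof (cases "length ps = n")
  case False
  then show ?thesis using f by (simp add: Br_n_def multilinear_form_def)
next
  case True
  let ?vs = "map dual_vec ps" and ?q = "ps ! Suc j"
  txt \<open>Moving the v-vector in front of the g-vector costs the sign of rho; moving it back is free.\<close>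
  have "f (?vs[j := rho (?vs ! Suc j), Suc j := ?vs ! j]) = f ?vs"
    using f j True gv(1) dual_vec_g by (intro braid_invariant_rho) (auto simp: Br_n_def)
  moreover have
    "?vs[j := rho (?vs ! Suc j), Suc j := ?vs ! j] = (adj_swap j ?vs)[j := - dual_vec ?q]"
    using j gv(2) by (intro nth_equalityI) (auto simp: adj_swap_def rho_dual_vec nth_list_update)
  moreover have
    "f ((adj_swap j ?vs)[j := - dual_vec ?q]) = - f ((adj_swap j ?vs)[j := dual_vec ?q])"
    using f j True by (intro linear_neg multilinear_form_slot) (auto simp: Br_n_def)
  moreover have "(adj_swap j ?vs)[j := dual_vec ?q] = adj_swap j ?vs"
    using j by (intro nth_equalityI) (auto simp: adj_swap_def nth_list_update)
  moreover have "f (adj_swap j ?vs) = f ?vs"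
    using Br_n_dual_vec_adj_swap[OF f j] j by (simp add: map_adj_swap)
  ultimately have "f ?vs = - f ?vs" by simp
  then show ?thesis by (simp add: eq_neg_iff_add_eq_0 flip: mult_2)
qed

lemma Br_n_dual_vec_mset:
  "f \<in> Br_n scale Hi Hv Hg rho n \<Longrightarrow> mset ps = mset qs \<Longrightarrow>
    f (map dual_vec ps) = f (map dual_vec qs)"
  by (rule adj_swap_invariant_imp_mset_invariant[of "\<lambda>ps. f (map dual_vec ps)"])
    (simp_all add: Br_n_dual_vec_adj_swap)

lemma Br_n_dual_vec_vanishes:
  assumes f: "f \<in> Br_n scale Hi Hv Hg rho n"
    and "\<not> monomial_avoids vg_pair (count (mset ps))"
  shows "f (map dual_vec ps) = 0"
proof -
  obtain p q where pq: "v_index p" "g_index q" "p \<in> set ps" "q \<in> set ps"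
    using assms(2) by (auto simp: monomial_avoids_def vg_pair_def)
  then have "p \<noteq> q" using not_vg_pair_refl by (auto simp: vg_pair_def)
  then have "p \<in># mset ps - {#q#}" using pq(3) by (simp add: in_diff_count)
  then have "mset ps = mset (q # p # remove1 p (remove1 q ps))"
    using pq(4) by (simp only: mset.simps mset_remove1 insert_DiffM set_mset_mset)
  then have "f (map dual_vec ps) = f (map dual_vec (q # p # remove1 p (remove1 q ps)))"
    by (rule Br_n_dual_vec_mset[OF f])
  also have "\<dots> = 0" using Br_n_dual_vec_gv[OF f, of 0 "q # p # _"] pq(1,2) by simp
  finally show ?thesis .
qed

definition Br_of_series :: "('p, 'k) mps \<Rightarrow> nat \<Rightarrow> 'h list \<Rightarrow> 'k" where
  "Br_of_series a = (\<lambda>n. form_of_coeffs (\<lambda>ps. if monomial_avoids vg_pair (count (mset ps))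
     then a (count (mset ps)) else 0) n)"

lemma Br_of_series_add:
  "Br_of_series (mps_add a b) = (\<lambda>n vs. Br_of_series a n vs + Br_of_series b n vs)"
  by (auto simp: Br_of_series_def form_of_coeffs_def mps_add_def fun_eq_iff distrib_right
      sum.distrib[symmetric] intro!: sum.cong)

lemma Br_of_series_scale: "Br_of_series (\<lambda>m. c * a m) = (\<lambda>n vs. c * Br_of_series a n vs)"
  by (auto simp: Br_of_series_def form_of_coeffs_def fun_eq_iff sum_distrib_left intro!: sum.cong)

lemma Br_of_series_in_Br_series: "Br_of_series a \<in> Br_series scale Hi Hv Hg rho"
  unfolding Br_series_def Br_n_def Br_of_series_def
  by (auto intro!: multilinear_form_of_coeffs form_of_coeffs_braid_invariant)

lemma Br_of_series_dual_vec:
  "Br_of_series a (length ps) (map dual_vec ps) =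
     (if monomial_avoids vg_pair (count (mset ps)) then a (count (mset ps)) else 0)"
  by (simp add: Br_of_series_def form_of_coeffs_dual[OF x_dual_vec])

lemma Br_series_eq_Br_of_series:
  assumes F: "F \<in> Br_series scale Hi Hv Hg rho"
  defines "lst \<equiv> inv (\<lambda>ps. count (mset ps))"
  shows "F = Br_of_series (\<lambda>m. F (length (lst m)) (map dual_vec (lst m)))"
proof
  fix n
  have Fn: "F n \<in> Br_n scale Hi Hv Hg rho n" using F by (simp add: Br_series_def)
  have coeff: "F n (map dual_vec ps) = (if monomial_avoids vg_pair (count (mset ps))
      then F (length (lst (count (mset ps)))) (map dual_vec (lst (count (mset ps)))) else 0)"
    if "length ps = n" for ps
  proof -
    have "count (mset (lst (count (mset ps)))) = count (mset ps)"
      unfolding lst_def by (rule surj_f_inv_f[OF surj_count_mset])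
    then have "mset (lst (count (mset ps))) = mset ps" by (simp add: multiset_eq_iff)
    then show ?thesis
      using that Br_n_dual_vec_mset[OF Fn] Br_n_dual_vec_vanishes[OF Fn] by (metis size_mset)
  qed
  have "F n = form_of_coeffs (\<lambda>ps. F n (map dual_vec ps)) n"
    using Fn by (intro multilinear_form_eq_form_of_coeffs[OF x_dual_vec]) (simp add: Br_n_def)
  also have "\<dots> = Br_of_series (\<lambda>m. F (length (lst m)) (map dual_vec (lst m))) n"
    unfolding Br_of_series_def by (rule form_of_coeffs_cong) (rule coeff)
  finally show "F n = Br_of_series (\<lambda>m. F (length (lst m)) (map dual_vec (lst m))) n" .
qed

lemma Br_of_series_eq_0_iff: "Br_of_series a = (\<lambda>n vs. 0) \<longleftrightarrow> a \<in> vanishing_on_avoiding vg_pair"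
proof
  assume "Br_of_series a = (\<lambda>n vs. 0)"
  then have zero: "monomial_avoids vg_pair (count (mset ps)) \<Longrightarrow> a (count (mset ps)) = 0" for ps
    using Br_of_series_dual_vec[of a ps] by simp
  show "a \<in> vanishing_on_avoiding vg_pair"
    unfolding vanishing_on_avoiding_def
  proof (intro CollectI allI impI)
    fix m :: "'p \<Rightarrow> nat" assume "monomial_avoids vg_pair m"
    moreover obtain ps where "m = count (mset ps)" using surjD[OF surj_count_mset] by blast
    ultimately show "a m = 0" using zero by simp
  qed
next
  assume "a \<in> vanishing_on_avoiding vg_pair"
  then have "(\<lambda>ps. if monomial_avoids vg_pair (count (mset ps)) then a (count (mset ps)) else 0) =
      (\<lambda>_. 0)"
    by (auto simp: vanishing_on_avoiding_def)
  then show "Br_of_series a = (\<lambda>n vs. 0)"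
    by (simp add: Br_of_series_def form_of_coeffs_def fun_eq_iff)
qed

lemma ideal_I_eq_vanishing_on_avoiding: "ideal_I x scale Hi Hv Hg = vanishing_on_avoiding vg_pair"
proof -
  have "ideal_I x scale Hi Hv Hg = mps_ideal_gen {mps_X2 p q | p q. vg_pair p q}"
    by (simp add: ideal_I_def vg_pair_def v_index_def g_index_def)
  also have "\<dots> = vanishing_on_avoiding vg_pair"
    by (rule mps_ideal_gen_X2_eq_vanishing_on_avoiding) (rule not_vg_pair_refl)
  finally show ?thesis .
qed

end

theorem proposition5p2:
  fixes scale :: "'k::field_char_0 \<Rightarrow> 'h::ab_group_add \<Rightarrow> 'h"
    and Hi Hv Hg :: "'h set"
    and rho :: "'h \<Rightarrow> 'h"
    and x :: "'p::finite \<Rightarrow> 'h \<Rightarrow> 'k"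
  assumes vs: "vector_space scale"
    and fin: "\<exists>B. finite B \<and> module.span scale B = UNIV"
    and sub_i: "module.subspace scale Hi"
    and sub_v: "module.subspace scale Hv"
    and sub_g: "module.subspace scale Hg"
    and dsum: "direct_sum3 Hi Hv Hg"
    and rho_lin: "Vector_Spaces.linear scale scale rho"
    and rho_i: "\<forall>h\<in>Hi. rho h = h"
    and rho_v: "\<forall>h\<in>Hv. rho h = - h"
    and rho_g: "\<forall>h\<in>Hg. rho h = h"
    and basis: "dual_basis scale x"
    and homog: "\<forall>p. x p \<in> dual_part scale Hv Hg \<or> x p \<in> dual_part scale Hi Hg
                    \<or> x p \<in> dual_part scale Hi Hv"
  shows "\<exists>\<phi> :: ('p, 'k) mps \<Rightarrow> (nat \<Rightarrow> 'h list \<Rightarrow> 'k).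
           (\<forall>a b. \<phi> (mps_add a b) = (\<lambda>n vs. \<phi> a n vs + \<phi> b n vs)) \<and>
           (\<forall>c a. \<phi> (\<lambda>m. c * a m) = (\<lambda>n vs. c * \<phi> a n vs)) \<and>
           \<phi> ` UNIV = Br_series scale Hi Hv Hg rho \<and>
           (\<forall>a. \<phi> a = (\<lambda>n vs. 0) \<longleftrightarrow> a \<in> ideal_I x scale Hi Hv Hg)"
proof -
  interpret homogeneous_dual_basis scale x Hi Hv Hg rho
    using vs fin basis sub_i sub_v dsum rho_lin rho_i rho_v rho_g homog
    by (intro homogeneous_dual_basis.intro finite_dual_basis.intro finite_dual_basis_axioms.intro
        homogeneous_dual_basis_axioms.intro)
  have "range Br_of_series = Br_series scale Hi Hv Hg rho"
    using Br_of_series_in_Br_series Br_series_eq_Br_of_series by blast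
  then show ?thesis
    by (intro exI[of _ Br_of_series] conjI allI Br_of_series_add Br_of_series_scale)
      (simp_all add: Br_of_series_eq_0_iff ideal_I_eq_vanishing_on_avoiding)
qed

end
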